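(* Let $V\subset\mathbb{R}^d$ be a finite antichain, $p\in S_V$, $v\in D_p$ with $v_i=p_i$, and assume $v$ is not an $i$-witness for $p$. Then either $p$ is not a characteristic point or $V$ is degenerate.
   Context: For $x,y\in\mathbb{R}^d$, $x\le y$ (dominance order) means $x_i\le y_i$ for all $i$; $y\rhd x$ means $y_i>x_i$ for all $i$; $y\rhd_i x$ means $y_i=x_i$ and $y_j>x_j$ for all $j\neq i$. $V\subset\mathbb{R}^d$ is a finite antichain in the dominance order (elements are called minima). The orthogonal surface $S_V$ is the topological boundary of $\langle V\rangle=\{x: x\ge v\text{ for some }v\in V\}$; equivalently $p\in S_V$ iff there is $v\in V$ with $v\le p$ and no $w\in V$ with $p\rhd w$. For $p\in S_V$, $D_p=\{v\in V:v\le p\}$ and for $v\in D_p$, $T_p(v)=\{i: p_i=v_i\}$. For $p\in S_V$, a minimum $v\in D_p$ is an $i$-witness for $p$ if there is $q\in S_V$ with $v\le p\le q$ and $q\rhd_i v$. Flats: $U_i(v)=\{p\in S_V: p\rhd_i v\}$; for $v,w\in V$ put $v\sim_i w$ iff $U_i(v)\cap U_i(w)\neq\emptyset$, and let $\sim_i^c$ be the reflexive–transitive closure; the $i$-flat of $v$ is $F_i(v)=\overline{\bigcup_{w\sim_i^c v}U_i(w)}$ (topological closure), and an $i$-flat is any set of this form. A characteristic point is a point of $S_V$ that lies in some $i$-flat for every $i\in\{1,\dots,d\}$. $V$ is degenerate if there exist a characteristic point $p$, minima $x,u,v\in D_p$ and coordinates $i\neq j$ with $u_i<v_i=x_i=p_i$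 and $v_j<u_j=x_j=p_j$; otherwise $V$ is non-degenerate. *)

theory Defs
  imports "HOL-Analysis.Analysis"
begin

definition dom_le :: "real ^ 'd \<Rightarrow> real ^ 'd \<Rightarrow> bool" where
  "dom_le x y \<longleftrightarrow> (\<forall>i. x $ i \<le> y $ i)"

definition dom_gt :: "real ^ 'd \<Rightarrow> real ^ 'd \<Rightarrow> bool" where
  "dom_gt y x \<longleftrightarrow> (\<forall>i. y $ i > x $ i)"

definition dom_gt_i :: "'d \<Rightarrow> real ^ 'd \<Rightarrow> real ^ 'd \<Rightarrow> bool" where
  "dom_gt_i i y x \<longleftrightarrow> y $ i = x $ i \<and> (\<forall>j. j \<noteq> i \<longrightarrow> y $ j > x $ j)"

definition finite_antichain :: "(real ^ 'd) set \<Rightarrow> bool" where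
  "finite_antichain V \<longleftrightarrow> finite V \<and> (\<forall>v\<in>V. \<forall>w\<in>V. dom_le v w \<longrightarrow> v = w)"

definition orth_surface :: "(real ^ 'd) set \<Rightarrow> (real ^ 'd) set" where
  "orth_surface V = {p. (\<exists>v\<in>V. dom_le v p) \<and> \<not> (\<exists>w\<in>V. dom_gt p w)}"

definition Dp :: "(real ^ 'd) set \<Rightarrow> real ^ 'd \<Rightarrow> (real ^ 'd) set" where
  "Dp V p = {v\<in>V. dom_le v p}"

definition is_witness :: "(real ^ 'd) set \<Rightarrow> 'd \<Rightarrow> real ^ 'd \<Rightarrow> real ^ 'd \<Rightarrow> bool" where
  "is_witness V i v p \<longleftrightarrow> v \<in> Dp V p \<and>
     (\<exists>q\<in>orth_surface V. dom_le v p \<and> dom_le p q \<and> dom_gt_i i q v)"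

definition Uflat :: "(real ^ 'd) set \<Rightarrow> 'd \<Rightarrow> real ^ 'd \<Rightarrow> (real ^ 'd) set" where
  "Uflat V i v = {p\<in>orth_surface V. dom_gt_i i p v}"

definition sim_i :: "(real ^ 'd) set \<Rightarrow> 'd \<Rightarrow> real ^ 'd \<Rightarrow> real ^ 'd \<Rightarrow> bool" where
  "sim_i V i v w \<longleftrightarrow> v \<in> V \<and> w \<in> V \<and> Uflat V i v \<inter> Uflat V i w \<noteq> {}"

definition simc_i :: "(real ^ 'd) set \<Rightarrow> 'd \<Rightarrow> real ^ 'd \<Rightarrow> real ^ 'd \<Rightarrow> bool" where
  "simc_i V i v w \<longleftrightarrow> v \<in> V \<and> w \<in> V \<and> (sim_i V i)\<^sup>*\<^sup>* v w"

definition iflat :: "(real ^ 'd) set \<Rightarrow> 'd \<Rightarrow> real ^ 'd \<Rightarrow> (real ^ 'd) set" where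
  "iflat V i v = closure (\<Union>{Uflat V i w | w. simc_i V i w v})"

definition characteristic_point :: "(real ^ 'd) set \<Rightarrow> real ^ 'd \<Rightarrow> bool" where
  "characteristic_point V p \<longleftrightarrow> p \<in> orth_surface V \<and>
     (\<forall>i. \<exists>v\<in>V. p \<in> iflat V i v)"

definition degenerate :: "(real ^ 'd) set \<Rightarrow> bool" where
  "degenerate V \<longleftrightarrow> (\<exists>p x u v i j. characteristic_point V p \<and>
     x \<in> Dp V p \<and> u \<in> Dp V p \<and> v \<in> Dp V p \<and> i \<noteq> j \<and>
     u $ i < v $ i \<and> v $ i = x $ i \<and> x $ i = p $ i \<and>
     v $ j < u $ j \<and> u $ j = x $ j \<and> x $ j = p $ j)"

end

theory Submission
  imports Defs
begin

text \<open>Since v is not an i-witness, pushing p up slightly in every coordinate k \<noteq> i where v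
  touches it leaves the surface: the resulting point dominates some minimum w with w \<le> p,
  w_i < p_i and T_p(w) \<subseteq> T_p(v). On the other hand p is a limit of points y of some flat
  U_i(u), so u_i = p_i and u \<le> p. A point y close enough to p still lies strictly above w in
  every coordinate where w is below p; since y is on the surface, some coordinate k \<noteq> i with
  w_k = p_k has u_k < y_k \<le> w_k. Then v, w, u and the coordinates i, k witness degeneracy.\<close>

lemma closure_Union_finite:
  fixes F :: "'a::topological_space set set"
  shows "finite F \<Longrightarrow> closure (\<Union>F) = \<Union>(closure ` F)"
  by (induction rule: finite_induct) auto

lemma point_in_closure_of_flat:
  assumes "finite V" and "p \<in> iflat V i v"
  obtains u where "u \<in> V" and "p \<in> closure (Uflat V i u)"
proof -
  let ?F = "{Uflat V i w | w. simc_i V i w v}"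
  have "?F \<subseteq> Uflat V i ` V"
    unfolding simc_i_def by auto
  then have "finite ?F"
    using assms(1) finite_surj by blast
  then have "closure (\<Union>?F) = \<Union>(closure ` ?F)"
    by (rule closure_Union_finite)
  then have "p \<in> \<Union>(closure ` ?F)"
    using assms(2) unfolding iflat_def by simp
  then show thesis
    using that unfolding simc_i_def by auto
qed

lemma closure_Uflat_subset:
  "closure (Uflat V i u) \<subseteq> {p. p $ i = u $ i \<and> dom_le u p}"
proof (rule closure_minimal)
  show "Uflat V i u \<subseteq> {p. p $ i = u $ i \<and> dom_le u p}"
    unfolding Uflat_def dom_gt_i_def dom_le_def by clarsimp (metis less_imp_le order_refl)
  have "{p. p $ i = u $ i \<and> dom_le u p} = {p. p $ i = u $ i} \<inter> {p. \<forall>j. u $ j \<le> p $ j}"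
    unfolding dom_le_def by auto
  then show "closed {p. p $ i = u $ i \<and> dom_le u p}"
    by (simp add: closed_Int closed_interval_right_cart closed_Collect_eq continuous_on_component)
qed

lemma exists_escape_point:
  fixes V :: "(real ^ 'd) set"
  assumes "finite V" and "dom_le v p" and "v $ i = p $ i"
  obtains q where "dom_le p q" and "dom_gt_i i q v"
    and "\<And>w. w \<in> V \<Longrightarrow> dom_gt q w \<Longrightarrow>
           dom_le w p \<and> w $ i < p $ i \<and> (\<forall>k. w $ k = p $ k \<longrightarrow> v $ k = p $ k)"
proof -
  let ?G = "(\<lambda>(w, k). w $ k - p $ k) ` (V \<times> UNIV)"
  have "finite ?G"
    using assms(1) by simp
  then obtain \<epsilon> :: real where "\<epsilon> > 0" and avoid: "\<forall>x\<in>?G. x \<noteq> 0 \<longrightarrow> \<epsilon> \<le> dist 0 x"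
    using finite_set_avoid by blast
  have gap: "\<epsilon> \<le> w $ k - p $ k" if "w \<in> V" and "w $ k > p $ k" for w k
  proof -
    have "w $ k - p $ k \<in> ?G"
      using that(1) by force
    with avoid have "w $ k - p $ k \<noteq> 0 \<longrightarrow> \<epsilon> \<le> dist 0 (w $ k - p $ k)"
      by blast
    then show ?thesis
      using that(2) by (simp add: dist_real_def)
  qed
  define q :: "real ^ 'd" where
    "q = (\<chi> k. if k \<noteq> i \<and> v $ k = p $ k then p $ k + \<epsilon> else p $ k)"
  have q_le: "q $ k \<le> p $ k + \<epsilon>" and q_tight: "q $ k = p $ k \<longleftrightarrow> k = i \<or> v $ k \<noteq> p $ k" for k
    unfolding q_def using \<open>\<epsilon> > 0\<close> by auto
  show thesis
  proof
    show "dom_le p q"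
      unfolding q_def dom_le_def using \<open>\<epsilon> > 0\<close> by auto
    show "dom_gt_i i q v"
      using assms(2,3) \<open>\<epsilon> > 0\<close> unfolding q_def dom_gt_i_def dom_le_def
      by (auto simp: order.strict_iff_order)
  next
    fix w assume "w \<in> V" and qw: "dom_gt q w"
    have "w $ k \<le> p $ k" for k
    proof (rule ccontr)
      assume "\<not> w $ k \<le> p $ k"
      then have "\<epsilon> \<le> w $ k - p $ k"
        using gap[OF \<open>w \<in> V\<close>] by simp
      moreover have "w $ k < q $ k"
        using qw unfolding dom_gt_def by blast
      ultimately show False
        using q_le[of k] by simp
    qed
    moreover have "k \<noteq> i \<and> v $ k = p $ k" if "w $ k = p $ k" for k
    proof -
      have "q $ k \<noteq> p $ k"
        using qw that unfolding dom_gt_def by (metis less_irrefl)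
      then show ?thesis
        using q_tight[of k] by blast
    qed
    ultimately show "dom_le w p \<and> w $ i < p $ i \<and> (\<forall>k. w $ k = p $ k \<longrightarrow> v $ k = p $ k)"
      unfolding dom_le_def by (metis order.not_eq_order_implies_strict)
  qed
qed

lemma non_witness_obtains_blocker:
  assumes "finite V" and "v \<in> Dp V p" and "v $ i = p $ i" and "\<not> is_witness V i v p"
  obtains w where "w \<in> Dp V p" and "w $ i < p $ i" and "\<And>k. w $ k = p $ k \<Longrightarrow> v $ k = p $ k"
proof -
  have "v \<in> V" and "dom_le v p"
    using assms(2) unfolding Dp_def by auto
  obtain q where "dom_le p q" and "dom_gt_i i q v" and escape: "\<And>w. w \<in> V \<Longrightarrow> dom_gt q w \<Longrightarrow>
           dom_le w p \<and> w $ i < p $ i \<and> (\<forall>k. w $ k = p $ k \<longrightarrow> v $ k = p $ k)"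
    using exists_escape_point[OF assms(1) \<open>dom_le v p\<close> assms(3)] by blast
  have "q \<notin> orth_surface V"
    using assms(2,4) \<open>dom_le v p\<close> \<open>dom_le p q\<close> \<open>dom_gt_i i q v\<close> unfolding is_witness_def by blast
  moreover have "dom_le v q"
    using \<open>dom_le v p\<close> \<open>dom_le p q\<close> unfolding dom_le_def by (meson order_trans)
  ultimately obtain w where "w \<in> V" and "dom_gt q w"
    using \<open>v \<in> V\<close> unfolding orth_surface_def by auto
  then show thesis
    using that escape unfolding Dp_def by blast
qed

lemma closure_Uflat_meets_blocker:
  assumes "p \<in> closure (Uflat V i u)" and "w \<in> V" and "dom_le w p" and "w $ i < p $ i"
  obtains k where "k \<noteq> i" and "w $ k = p $ k" and "u $ k < w $ k"
proof -
  let ?N = "\<Inter>k\<in>{k. w $ k < p $ k}. {y. w $ k < y $ k}"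
  have "open ?N"
    by (intro open_INT finite ballI open_halfspace_component_gt_cart)
  moreover have "p \<in> ?N"
    by simp
  ultimately obtain y where "y \<in> Uflat V i u" and "y \<in> ?N"
    using assms(1) unfolding closure_iff_nhds_not_empty by blast
  then have "y \<in> orth_surface V" and y_above_u: "dom_gt_i i y u"
    unfolding Uflat_def by auto
  then obtain k where "y $ k \<le> w $ k"
    using assms(2) unfolding orth_surface_def dom_gt_def by (auto simp: not_less)
  moreover have "w $ k = p $ k"
    using \<open>y \<in> ?N\<close> \<open>y $ k \<le> w $ k\<close> assms(3) unfolding dom_le_def
    by (force simp: order.order_iff_strict)
  moreover have "k \<noteq> i"
    using \<open>w $ k = p $ k\<close> assms(4) by auto
  ultimately show thesis
    using that y_above_u unfolding dom_gt_i_def by force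
qed

theorem lemma4p7:
  fixes V :: "(real ^ 'd) set" and p v :: "real ^ 'd" and i :: 'd
  assumes "finite_antichain V"
    and "p \<in> orth_surface V"
    and "v \<in> Dp V p"
    and "v $ i = p $ i"
    and "\<not> is_witness V i v p"
  shows "\<not> characteristic_point V p \<or> degenerate V"
  unfolding imp_conv_disj[symmetric]
proof
  assume cp: "characteristic_point V p"
  have "finite V"
    using assms(1) unfolding finite_antichain_def by simp
  obtain w where "w \<in> Dp V p" and "w $ i < p $ i" and tight: "\<And>k. w $ k = p $ k \<Longrightarrow> v $ k = p $ k"
    using non_witness_obtains_blocker[OF \<open>finite V\<close> assms(3-5)] by blast
  obtain v0 where "p \<in> iflat V i v0"
    using cp unfolding characteristic_point_def by blast
  then obtain u where "u \<in> V" and "p \<in> closure (Uflat V i u)"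
    using point_in_closure_of_flat \<open>finite V\<close> by blast
  then have "u $ i = p $ i" and "u \<in> Dp V p"
    using closure_Uflat_subset unfolding Dp_def by fastforce+
  obtain k where "k \<noteq> i" and "w $ k = p $ k" and "u $ k < w $ k"
    using closure_Uflat_meets_blocker \<open>p \<in> closure (Uflat V i u)\<close> \<open>w \<in> Dp V p\<close> \<open>w $ i < p $ i\<close>
    unfolding Dp_def by blast
  then show "degenerate V"
    unfolding degenerate_def
    using cp assms(3,4) \<open>w \<in> Dp V p\<close> \<open>u \<in> Dp V p\<close> \<open>w $ i < p $ i\<close> \<open>u $ i = p $ i\<close> tight
    by (intro exI[of _ p] exI[of _ v] exI[of _ w] exI[of _ u] exI[of _ i] exI[of _ k]) simp
qed

end
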